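(* For every $i\in\{1,\dots,n-1\}$ one has in $SB_n^+$ $$\sigma_i\Delta\doteq\Delta\,\sigma_{n-i},\qquad x_i\Delta\doteq \Delta\, x_{n-i},$$ i.e. $\sigma_i\Delta\doteq\Delta\mathcal R(\sigma_i)$ and $x_i\Delta\doteq\Delta\mathcal R(x_i)$.
   Context: Fix $n\ge 2$. The positive singular braid monoid $SB_n^+$ is the monoid with generators $\sigma_1,\dots,\sigma_{n-1},x_1,\dots,x_{n-1}$ and relations: $\sigma_i\sigma_j=\sigma_j\sigma_i$ and $x_ix_j=x_jx_i$ if $|i-j|>1$; $x_i\sigma_j=\sigma_jx_i$ if $|i-j|\ne 1$; $\sigma_i\sigma_{i+1}\sigma_i=\sigma_{i+1}\sigma_i\sigma_{i+1}$; $\sigma_i\sigma_{i+1}x_i=x_{i+1}\sigma_i\sigma_{i+1}$; $\sigma_{i+1}\sigma_ix_{i+1}=x_i\sigma_{i+1}\sigma_i$. For positive words (words in $\sigma_i,x_i$), $A\doteq B$ means they represent the same element of $SB_n^+$. Garside's fundamental word is $\Delta\equiv\Pi_{n-1}\Pi_{n-2}\cdots\Pi_1$ where $\Pi_t\equiv\sigma_1\sigma_2\cdots\sigma_t$, i.e. $\Delta\equiv\sigma_1\cdots\sigma_{n-1}\sigma_1\cdots\sigma_{n-2}\cdots\sigma_1\sigma_2\sigma_1$. $\mathcal R$ is the letter substitution $\sigma_i\mapsto\sigma_{n-i}$, $x_i\mapsto x_{n-i}$. *)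

theory Defs
  imports Main
begin

text \<open>Letters of positive singular braid words: Sig i is sigma_i, X i is x_i.\<close>
datatype letter = Sig nat | X nat

type_synonym word = "letter list"

inductive sb_rel :: "nat \<Rightarrow> word \<Rightarrow> word \<Rightarrow> bool" for n :: nat where
  ss_comm: "\<lbrakk>1 \<le> i; i \<le> n - 1; 1 \<le> j; j \<le> n - 1; i + 1 < j \<or> j + 1 < i\<rbrakk>
     \<Longrightarrow> sb_rel n [Sig i, Sig j] [Sig j, Sig i]"
| xx_comm: "\<lbrakk>1 \<le> i; i \<le> n - 1; 1 \<le> j; j \<le> n - 1; i + 1 < j \<or> j + 1 < i\<rbrakk>
     \<Longrightarrow> sb_rel n [X i, X j] [X j, X i]"
| xs_comm: "\<lbrakk>1 \<le> i; i \<le> n - 1; 1 \<le> j; j \<le> n - 1; i \<noteq> j + 1; j \<noteq> i + 1\<rbrakk>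
     \<Longrightarrow> sb_rel n [X i, Sig j] [Sig j, X i]"
| braid: "\<lbrakk>1 \<le> i; i + 1 \<le> n - 1\<rbrakk>
     \<Longrightarrow> sb_rel n [Sig i, Sig (i+1), Sig i] [Sig (i+1), Sig i, Sig (i+1)]"
| mix1: "\<lbrakk>1 \<le> i; i + 1 \<le> n - 1\<rbrakk>
     \<Longrightarrow> sb_rel n [Sig i, Sig (i+1), X i] [X (i+1), Sig i, Sig (i+1)]"
| mix2: "\<lbrakk>1 \<le> i; i + 1 \<le> n - 1\<rbrakk>
     \<Longrightarrow> sb_rel n [Sig (i+1), Sig i, X (i+1)] [X i, Sig (i+1), Sig i]"

text \<open>A \<doteq> B in SB_n^+: the monoid congruence generated by the relations.\<close>
inductive sb_eq :: "nat \<Rightarrow> word \<Rightarrow> word \<Rightarrow> bool" for n :: nat where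
  sb_refl: "sb_eq n w w"
| sb_sym: "sb_eq n u v \<Longrightarrow> sb_eq n v u"
| sb_trans: "sb_eq n u v \<Longrightarrow> sb_eq n v w \<Longrightarrow> sb_eq n u w"
| sb_step: "sb_rel n u v \<Longrightarrow> sb_eq n (a @ u @ b) (a @ v @ b)"

definition Pi_word :: "nat \<Rightarrow> word" where
  "Pi_word t = map Sig [1..<t+1]"

text \<open>Garside's fundamental word Delta = Pi_{n-1} Pi_{n-2} ... Pi_1\<close>
definition Delta :: "nat \<Rightarrow> word" where
  "Delta n = concat (map (\<lambda>k. Pi_word (n - 1 - k)) [0..<n-1])"

fun R_letter :: "nat \<Rightarrow> letter \<Rightarrow> letter" where
  "R_letter n (Sig i) = Sig (n - i)"
| "R_letter n (X i) = X (n - i)"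

end

theory Submission
  imports Defs
begin

text \<open>
  Write \<open>a\<^sub>i\<close> for either \<open>\<sigma>\<^sub>i\<close> or \<open>x\<^sub>i\<close>. Since
  \<open>\<Delta>\<^sub>m\<^sub>+\<^sub>1 = \<Pi>\<^sub>m \<Delta>\<^sub>m \<doteq> \<Delta>\<^sub>m \<Lambda>\<^sub>m\<close> with \<open>\<Lambda>\<^sub>m = \<sigma>\<^sub>m \<cdots> \<sigma>\<^sub>1\<close>, the claim
  \<open>a\<^sub>i \<Delta>\<^sub>m \<doteq> \<Delta>\<^sub>m a\<^sub>m\<^sub>-\<^sub>i\<close> follows by induction on \<open>m\<close>: for \<open>i \<ge> 2\<close> the letter
  \<open>a\<^sub>i\<close> slides through \<open>\<Pi>\<^sub>m\<close> and comes out as \<open>a\<^sub>i\<^sub>-\<^sub>1\<close>, and for \<open>i = 1\<close> it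
  first crosses \<open>\<Delta>\<^sub>m\<close> and then slides through \<open>\<Lambda>\<^sub>m\<close>, coming out as \<open>a\<^sub>m\<close>.
  Each slide uses far commutativity everywhere except at one adjacent pair
  \<open>\<sigma>\<^sub>j\<sigma>\<^sub>j\<^sub>+\<^sub>1\<close> (resp. \<open>\<sigma>\<^sub>j\<^sub>+\<^sub>1\<sigma>\<^sub>j\<close>), where a braid or mixed relation applies.
\<close>

declare sb_eq.sb_trans [trans]

lemma sb_eq_rel: "sb_rel n u v \<Longrightarrow> sb_eq n u v"
  using sb_eq.sb_step[of n u v "[]" "[]"] by simp

lemma sb_eq_context: "sb_eq n u v \<Longrightarrow> sb_eq n (p @ u @ q) (p @ v @ q)"
proof (induction rule: sb_eq.induct)
  case sb_refl
  show ?case by (rule sb_eq.sb_refl)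
next
  case sb_sym
  show ?case using sb_sym.IH by (rule sb_eq.sb_sym)
next
  case sb_trans
  show ?case using sb_trans.IH by (rule sb_eq.sb_trans)
next
  case (sb_step u v a b)
  then have "sb_eq n ((p @ a) @ u @ (b @ q)) ((p @ a) @ v @ (b @ q))"
    by (rule sb_eq.sb_step)
  then show ?case by simp
qed

lemma sb_eq_pass_append:
  assumes "sb_eq n (a # u) (u @ [b])" and "sb_eq n (b # v) (v @ [c])"
  shows "sb_eq n (a # u @ v) ((u @ v) @ [c])"
proof -
  have "sb_eq n (a # u @ v) (u @ b # v)"
    using sb_eq_context[OF assms(1), of "[]" v] by simp
  also have "sb_eq n \<dots> ((u @ v) @ [c])"
    using sb_eq_context[OF assms(2), of u "[]"] by simp
  finally show ?thesis .
qed

lemma sb_eq_pass_commuting: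
  assumes "\<forall>l \<in> set w. sb_eq n [a, l] [l, a]"
  shows "sb_eq n (a # w) (w @ [a])"
  using assms
proof (induction w)
  case Nil
  show ?case by (simp add: sb_eq.sb_refl)
next
  case (Cons l w)
  then show ?case using sb_eq_pass_append[of n a "[l]" a w a] by simp
qed

lemma sb_eq_commute_Sig:
  assumes "mk \<in> {Sig, X}" and "1 \<le> i" "i < n" "1 \<le> j" "j < n"
    and "i \<noteq> Suc j" "j \<noteq> Suc i"
  shows "sb_eq n [mk i, Sig j] [Sig j, mk i]"
proof (cases "mk = Sig")
  case True
  show ?thesis
  proof (cases "i = j")
    case False
    then have "sb_rel n [Sig i, Sig j] [Sig j, Sig i]"
      using assms by (intro sb_rel.ss_comm) auto
    then show ?thesis using True by (simp add: sb_eq_rel)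
  qed (simp add: True sb_eq.sb_refl)
next
  case False
  then have "sb_rel n [X i, Sig j] [Sig j, X i]"
    using assms by (intro sb_rel.xs_comm) auto
  then show ?thesis using False assms(1) by (auto simp: sb_eq_rel)
qed

lemma sb_eq_pass_far_Sigs:
  assumes "mk \<in> {Sig, X}" and "1 \<le> i" "i < n"
    and "\<forall>j \<in> set js. 1 \<le> j \<and> j < n \<and> i \<noteq> Suc j \<and> j \<noteq> Suc i"
  shows "sb_eq n (mk i # map Sig js) (map Sig js @ [mk i])"
  using assms by (auto intro!: sb_eq_pass_commuting sb_eq_commute_Sig)

lemma sb_eq_pass_up_pair:
  assumes "mk \<in> {Sig, X}" and "1 \<le> j" "Suc j < n"
  shows "sb_eq n [mk (Suc j), Sig j, Sig (Suc j)] [Sig j, Sig (Suc j), mk j]"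
proof -
  have "sb_rel n [Sig j, Sig (Suc j), Sig j] [Sig (Suc j), Sig j, Sig (Suc j)]"
    and "sb_rel n [Sig j, Sig (Suc j), X j] [X (Suc j), Sig j, Sig (Suc j)]"
    using assms sb_rel.braid[of j n] sb_rel.mix1[of j n] by auto
  then show ?thesis using assms(1) by (auto dest: sb_eq_rel sb_eq.sb_sym)
qed

lemma sb_eq_pass_down_pair:
  assumes "mk \<in> {Sig, X}" and "1 \<le> j" "Suc j < n"
  shows "sb_eq n [mk j, Sig (Suc j), Sig j] [Sig (Suc j), Sig j, mk (Suc j)]"
proof -
  have "sb_rel n [Sig j, Sig (Suc j), Sig j] [Sig (Suc j), Sig j, Sig (Suc j)]"
    and "sb_rel n [Sig (Suc j), Sig j, X (Suc j)] [X j, Sig (Suc j), Sig j]"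
    using assms sb_rel.braid[of j n] sb_rel.mix2[of j n] by auto
  then show ?thesis using assms(1) by (auto dest: sb_eq_rel sb_eq.sb_sym)
qed

definition Lambda_word :: "nat \<Rightarrow> word" where
  "Lambda_word t = rev (Pi_word t)"

lemma Pi_word_Suc: "Pi_word (Suc t) = Pi_word t @ [Sig (Suc t)]"
  by (simp add: Pi_word_def)

lemma Lambda_word_Suc: "Lambda_word (Suc t) = Sig (Suc t) # Lambda_word t"
  by (simp add: Lambda_word_def Pi_word_Suc)

lemma Pi_word_split:
  assumes "1 \<le> j" "j < t"
  shows "Pi_word t = map Sig [1..<j] @ [Sig j, Sig (Suc j)] @ map Sig [Suc (Suc j)..<Suc t]"
proof -
  have "[1..<Suc t] = [1..<j] @ [j..<Suc t]"
    using assms upt_add_eq_append[of 1 j "Suc t - j"] by simp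
  also have "[j..<Suc t] = j # Suc j # [Suc (Suc j)..<Suc t]"
    using assms by (simp add: upt_conv_Cons)
  finally show ?thesis by (simp add: Pi_word_def)
qed

lemma sb_eq_pass_Pi_word:
  assumes "mk \<in> {Sig, X}" and "1 \<le> j" "j < t" "t < n"
  shows "sb_eq n (mk (Suc j) # Pi_word t) (Pi_word t @ [mk j])"
proof -
  have left: "sb_eq n (mk (Suc j) # map Sig [1..<j]) (map Sig [1..<j] @ [mk (Suc j)])"
    using assms by (intro sb_eq_pass_far_Sigs) auto
  have middle: "sb_eq n (mk (Suc j) # [Sig j, Sig (Suc j)]) ([Sig j, Sig (Suc j)] @ [mk j])"
    using assms sb_eq_pass_up_pair[of mk j n] by simp
  have right: "sb_eq n (mk j # map Sig [Suc (Suc j)..<Suc t])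
      (map Sig [Suc (Suc j)..<Suc t] @ [mk j])"
    using assms by (intro sb_eq_pass_far_Sigs) auto
  show ?thesis
    unfolding Pi_word_split[OF assms(2,3)]
    using sb_eq_pass_append[OF left sb_eq_pass_append[OF middle right]] by simp
qed

lemma sb_eq_pass_Lambda_word:
  assumes "mk \<in> {Sig, X}" and "1 \<le> j" "j < t" "t < n"
  shows "sb_eq n (mk j # Lambda_word t) (Lambda_word t @ [mk (Suc j)])"
proof -
  have split: "Lambda_word t = map Sig (rev [Suc (Suc j)..<Suc t]) @ [Sig (Suc j), Sig j]
      @ map Sig (rev [1..<j])"
    using assms by (simp add: Lambda_word_def Pi_word_split rev_map)
  have left: "sb_eq n (mk j # map Sig (rev [Suc (Suc j)..<Suc t]))
      (map Sig (rev [Suc (Suc j)..<Suc t]) @ [mk j])"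
    using assms by (intro sb_eq_pass_far_Sigs) auto
  have middle: "sb_eq n (mk j # [Sig (Suc j), Sig j]) ([Sig (Suc j), Sig j] @ [mk (Suc j)])"
    using assms sb_eq_pass_down_pair[of mk j n] by simp
  have right: "sb_eq n (mk (Suc j) # map Sig (rev [1..<j]))
      (map Sig (rev [1..<j]) @ [mk (Suc j)])"
    using assms by (intro sb_eq_pass_far_Sigs) auto
  show ?thesis
    unfolding split
    using sb_eq_pass_append[OF left sb_eq_pass_append[OF middle right]] by simp
qed

lemma Delta_Suc: "Delta (Suc m) = Pi_word m @ Delta m"
proof (cases m)
  case (Suc k)
  then have "[0..<Suc m - 1] = 0 # map Suc [0..<m - 1]"
    by (simp add: map_Suc_upt upt_conv_Cons)
  then show ?thesis unfolding Delta_def by (simp add: comp_def)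
qed (simp add: Delta_def Pi_word_def)

lemma set_Delta: "set (Delta m) \<subseteq> Sig ` {1..<m}"
  unfolding Delta_def Pi_word_def by auto

lemma sb_eq_Delta_Suc_Lambda:
  "m < n \<Longrightarrow> sb_eq n (Delta (Suc m)) (Delta m @ Lambda_word m)"
proof (induction m)
  case 0
  show ?case by (simp add: Delta_def Lambda_word_def Pi_word_def sb_eq.sb_refl)
next
  case (Suc m)
  have "Delta (Suc (Suc m)) = Pi_word m @ [Sig (Suc m)] @ Delta (Suc m)"
    by (simp add: Delta_Suc Pi_word_Suc)
  also have "sb_eq n \<dots> (Pi_word m @ (Sig (Suc m) # Delta m) @ Lambda_word m)"
    using sb_eq_context[OF Suc.IH, of "Pi_word m @ [Sig (Suc m)]" "[]"] Suc.prems by simp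
  also have "sb_eq n \<dots> (Pi_word m @ (Delta m @ [Sig (Suc m)]) @ Lambda_word m)"
  proof (rule sb_eq_context, rule sb_eq_pass_commuting, rule ballI)
    fix l assume "l \<in> set (Delta m)"
    with set_Delta[of m] obtain j where "l = Sig j" "1 \<le> j" "j < m" by auto
    then show "sb_eq n [Sig (Suc m), l] [l, Sig (Suc m)]"
      using Suc.prems sb_eq_commute_Sig[of Sig "Suc m" n j] by simp
  qed
  also have "\<dots> = Delta (Suc m) @ Lambda_word (Suc m)"
    by (simp add: Delta_Suc Lambda_word_Suc)
  finally show ?case .
qed

lemma sb_eq_pass_Delta:
  assumes "mk \<in> {Sig, X}" and "m \<le> n" "1 \<le> i" "i < m"
  shows "sb_eq n (mk i # Delta m) (Delta m @ [mk (m - i)])"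
  using assms(2-)
proof (induction m arbitrary: i)
  case 0
  then show ?case by simp
next
  case (Suc m)
  consider (ge2) "2 \<le> i" | (base) "i = 1" "m = 1" | (one) "i = 1" "2 \<le> m"
    using Suc.prems by linarith
  then show ?case
  proof cases
    case ge2
    have Pi: "sb_eq n (mk (Suc (i - 1)) # Pi_word m) (Pi_word m @ [mk (i - 1)])"
      using ge2 Suc.prems by (intro sb_eq_pass_Pi_word assms(1)) auto
    have Delta: "sb_eq n (mk (i - 1) # Delta m) (Delta m @ [mk (m - (i - 1))])"
      using ge2 Suc.prems by (intro Suc.IH) auto
    show ?thesis
      using sb_eq_pass_append[OF Pi Delta] ge2 by (simp add: Delta_Suc Suc_diff_le)
  next
    case base
    have "sb_eq n [mk 1, Sig 1] [Sig 1, mk 1]"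
      using Suc.prems by (intro sb_eq_commute_Sig assms(1)) auto
    then show ?thesis using base by (simp add: Delta_def Pi_word_def)
  next
    case one
    have Delta_eq: "sb_eq n (Delta (Suc m)) (Delta m @ Lambda_word m)"
      using Suc.prems by (intro sb_eq_Delta_Suc_Lambda) auto
    have "sb_eq n (mk 1 # Delta (Suc m)) ([mk 1] @ (Delta m @ Lambda_word m) @ [])"
      using sb_eq_context[OF Delta_eq, of "[mk 1]" "[]"] by simp
    also have "sb_eq n \<dots> (Delta m @ Lambda_word m @ [mk (Suc (m - 1))])"
    proof -
      have Delta: "sb_eq n (mk 1 # Delta m) (Delta m @ [mk (m - 1)])"
        using one Suc.prems by (intro Suc.IH) auto
      have Lambda: "sb_eq n (mk (m - 1) # Lambda_word m) (Lambda_word m @ [mk (Suc (m - 1))])"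
        using one Suc.prems by (intro sb_eq_pass_Lambda_word assms(1)) auto
      show ?thesis using sb_eq_pass_append[OF Delta Lambda] by simp
    qed
    also have "sb_eq n \<dots> (Delta (Suc m) @ [mk (Suc (m - 1))])"
      using sb_eq_context[OF sb_eq.sb_sym[OF Delta_eq], of "[]" "[mk (Suc (m - 1))]"] by simp
    finally show ?thesis using one by simp
  qed
qed

theorem proposition2p3:
  fixes n i :: nat
  assumes "n \<ge> 2" and "1 \<le> i" and "i \<le> n - 1"
  shows "sb_eq n (Sig i # Delta n) (Delta n @ [R_letter n (Sig i)])
       \<and> sb_eq n (X i # Delta n) (Delta n @ [R_letter n (X i)])"
  using sb_eq_pass_Delta[of Sig n n i] sb_eq_pass_Delta[of X n n i] assms by auto

end
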